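(* The set $\mathcal V=\{\mathbf u(\mathbf B):\mathbf B\in S\}$ is a set of pairwise $M$-distinct vertices of $\mathcal H$, and every vertex of $\mathcal H$ is $M$-equivalent to some member of $\mathcal V$.
   Context: Let $n\ge 1$, $[n]=\{0,\dots,n-1\}$, and real numbers $\gamma_0<\gamma_1<\dots<\gamma_{n-1}$. Consider vectors $\mathbf v=(v_{ydz})_{y\in[n],d,z\in\{0,1\}}\in\mathbb R^{4n}$. Define the linear map $M$ by $(M\mathbf v)_{(i,j,d_0,d_1)}=\sum_{z\in\{0,1\}:d_z=0}v_{i0z}+\sum_{z\in\{0,1\}:d_z=1}v_{j1z}$ for $i,j\in[n]$, $(d_0,d_1)\in\{0,1\}^2$, and $c_{(i,j,d_0,d_1)}=\gamma_j-\gamma_i$. Let $\mathcal H=\{\mathbf v: M\mathbf v\le \mathbf c\}$. Two vectors $\mathbf v_1,\mathbf v_2$ are $M$-equivalent if $M\mathbf v_1=M\mathbf v_2$, and $M$-distinct otherwise. A point $\mathbf v\in\mathcal H$ is a vertex of $\mathcal H$ if whenever $\mathbf v=\lambda\mathbf v_1+(1-\lambda)\mathbf v_2$ with $\lambda\in(0,1)$, $\mathbf v_1,\mathbf v_2\in\mathcal H$, we have $M\mathbf v_1=M\mathbf v_2=M\mathbf v$. Admissible signatures: $S=S_1\cup S_2\cup S_3$, sets of binary arrays $\mathbf B=(B_{ydz})\in\{0,1\}^{n\times2\times2}$: (1) $\mathbf B\in S_1$ iff there is $t\in\{0,\dots,n-2\}$ with $B_{i00}=B_{i01}=1$ for all $i\ge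 t$ and $B_{i00}\ne B_{i01}$ for all $i<t$; $B_{i10}\ne B_{i11}$ for all $i\in[n]$; and there exist $i,j$ with $B_{i10}=B_{j11}=1$. (2) $\mathbf B\in S_2$ iff $B_{(n-1)00}=B_{(n-1)01}=B_{010}=B_{011}=1$; $B_{i00}\ne B_{i01}$ for all $0\le i<n-1$; $B_{j10}\ne B_{j11}$ for all $0<j\le n-1$. (3) $\mathbf B\in S_3$ iff there is $t\in\{1,\dots,n-1\}$ with $B_{i10}=B_{i11}=1$ for all $i\le t$ and $B_{i10}\ne B_{i11}$ for all $i>t$; $B_{i00}\ne B_{i01}$ for all $i\in[n]$; and there exist $i,j$ with $B_{i00}=B_{j01}=1$. Vertex map: for $\mathbf B\in S$, set $\alpha=-\gamma_0-\gamma_t$ if $\mathbf B\in S_1$, $\alpha=-\gamma_0-\gamma_{n-1}$ if $\mathbf B\in S_2$, $\alpha=-\gamma_t-\gamma_{n-1}$ if $\mathbf B\in S_3$ ($t$ as in the respective definition), and define $\mathbf u(\mathbf B)$ by: $u_{i00}=-\gamma_i-\alpha$ if $B_{i00}=1$, else $\gamma_0$; $u_{i10}=\gamma_i$ if $B_{i10}=1$, else $-\gamma_{n-1}-\alpha$; $u_{i01}=-\gamma_i$ if $B_{i01}=1$, else $\gamma_0+\alpha$; $u_{i11}=\gamma_i+\alpha$ if $B_{i11}=1$, else $-\gamma_{n-1}$. *)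

theory Defs
  imports Main "HOL.Real"
begin

(* Vectors v = (v_ydz), y in [n], d,z in {0,1}, are represented as functions
   nat => nat => nat => real; only entries with y < n, d <= 1, z <= 1 matter. *)
type_synonym vec = "nat \<Rightarrow> nat \<Rightarrow> nat \<Rightarrow> real"
(* Binary arrays B = (B_ydz), value 1 represented by True. *)
type_synonym sig = "nat \<Rightarrow> nat \<Rightarrow> nat \<Rightarrow> bool"

definition Mv :: "vec \<Rightarrow> nat \<Rightarrow> nat \<Rightarrow> nat \<Rightarrow> nat \<Rightarrow> real" where
  "Mv v i j d0 d1 =
     (if d0 = 0 then v i 0 0 else v j 1 0) + (if d1 = 0 then v i 0 1 else v j 1 1)"

definition M_equiv :: "nat \<Rightarrow> vec \<Rightarrow> vec \<Rightarrow> bool" where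
  "M_equiv n v1 v2 \<longleftrightarrow>
     (\<forall>i<n. \<forall>j<n. \<forall>d0\<le>1. \<forall>d1\<le>1. Mv v1 i j d0 d1 = Mv v2 i j d0 d1)"

definition inH :: "nat \<Rightarrow> (nat \<Rightarrow> real) \<Rightarrow> vec \<Rightarrow> bool" where
  "inH n \<gamma> v \<longleftrightarrow>
     (\<forall>i<n. \<forall>j<n. \<forall>d0\<le>1. \<forall>d1\<le>1. Mv v i j d0 d1 \<le> \<gamma> j - \<gamma> i)"

definition is_vertex :: "nat \<Rightarrow> (nat \<Rightarrow> real) \<Rightarrow> vec \<Rightarrow> bool" where
  "is_vertex n \<gamma> v \<longleftrightarrow> inH n \<gamma> v \<and>
     (\<forall>lam v1 v2. 0 < lam \<and> lam < 1 \<and> inH n \<gamma> v1 \<and> inH n \<gamma> v2 \<and>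
        (\<forall>y<n. \<forall>d\<le>1. \<forall>z\<le>1. v y d z = lam * v1 y d z + (1 - lam) * v2 y d z)
        \<longrightarrow> M_equiv n v1 v \<and> M_equiv n v2 v)"

definition S1 :: "nat \<Rightarrow> nat \<Rightarrow> sig \<Rightarrow> bool" where
  "S1 n t B \<longleftrightarrow> t + 2 \<le> n \<and>
     (\<forall>i. t \<le> i \<and> i < n \<longrightarrow> B i 0 0 \<and> B i 0 1) \<and>
     (\<forall>i<t. B i 0 0 \<noteq> B i 0 1) \<and>
     (\<forall>i<n. B i 1 0 \<noteq> B i 1 1) \<and>
     (\<exists>i<n. \<exists>j<n. B i 1 0 \<and> B j 1 1)"

definition S2 :: "nat \<Rightarrow> sig \<Rightarrow> bool" where
  "S2 n B \<longleftrightarrow>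
     B (n - 1) 0 0 \<and> B (n - 1) 0 1 \<and> B 0 1 0 \<and> B 0 1 1 \<and>
     (\<forall>i. i < n - 1 \<longrightarrow> B i 0 0 \<noteq> B i 0 1) \<and>
     (\<forall>j. 0 < j \<and> j \<le> n - 1 \<longrightarrow> B j 1 0 \<noteq> B j 1 1)"

definition S3 :: "nat \<Rightarrow> nat \<Rightarrow> sig \<Rightarrow> bool" where
  "S3 n t B \<longleftrightarrow> 1 \<le> t \<and> t \<le> n - 1 \<and>
     (\<forall>i\<le>t. B i 1 0 \<and> B i 1 1) \<and>
     (\<forall>i. t < i \<and> i < n \<longrightarrow> B i 1 0 \<noteq> B i 1 1) \<and>
     (\<forall>i<n. B i 0 0 \<noteq> B i 0 1) \<and>
     (\<exists>i<n. \<exists>j<n. B i 0 0 \<and> B j 0 1)"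

definition uvec :: "nat \<Rightarrow> (nat \<Rightarrow> real) \<Rightarrow> real \<Rightarrow> sig \<Rightarrow> vec" where
  "uvec n \<gamma> \<alpha> B y d z =
     (if y < n then
        (if d = 0 \<and> z = 0 then (if B y 0 0 then - \<gamma> y - \<alpha> else \<gamma> 0)
         else if d = 1 \<and> z = 0 then (if B y 1 0 then \<gamma> y else - \<gamma> (n - 1) - \<alpha>)
         else if d = 0 \<and> z = 1 then (if B y 0 1 then - \<gamma> y else \<gamma> 0 + \<alpha>)
         else if d = 1 \<and> z = 1 then (if B y 1 1 then \<gamma> y + \<alpha> else - \<gamma> (n - 1))
         else 0)
      else 0)"

definition Vset :: "nat \<Rightarrow> (nat \<Rightarrow> real) \<Rightarrow> vec set" where
  "Vset n \<gamma> =
     {uvec n \<gamma> (- \<gamma> 0 - \<gamma> t) B | t B. S1 n t B} \<union>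
     {uvec n \<gamma> (- \<gamma> 0 - \<gamma> (n - 1)) B | B. S2 n B} \<union>
     {uvec n \<gamma> (- \<gamma> t - \<gamma> (n - 1)) B | t B. S3 n t B}"

end

theory Submission
  imports Defs
begin

(*
  In the potentials
    a_i = v_i00 + gamma_i,  p_i = - v_i01 - gamma_i,  c_j = v_j10 - gamma_j,  q_j = gamma_j - v_j11
  of nodes A_i, P_i, C_j, Q_j, the polyhedron H is the system of difference constraints
    a_i <= p_i + gamma_i + gamma_0,  c_j <= p_i,  a_i <= q_j,  c_j + gamma_j + gamma_(n-1) <= q_j,
  and M-equivalence is a common translation of all potentials.  Moving a vertex by +-t along the
  indicator of a set of nodes shows that some tight constraint crosses every cut, i.e. the tight
  constraints connect all nodes.  Hence L = max a = min q and K = max c = min p are attained, every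
  pair (A_i, P_i), (C_j, Q_j) has a node at its level and is tight unless both are, and some tight
  pair joins the two levels, so L - K is gamma_t + gamma_0 or gamma_t + gamma_(n-1).  Conversely, at
  such a point tightness propagates any perturbation inside H as a common translation, so it is a
  vertex.  Which nodes sit at their level is the signature B; comparing L - K with gamma_i + gamma_0
  and gamma_j + gamma_(n-1) shows that B lies in S with alpha = K - L, and normalising K = 0 picks
  u(B) out of the equivalence class.
*)

definition potA :: "(nat \<Rightarrow> real) \<Rightarrow> vec \<Rightarrow> nat \<Rightarrow> real" where
  "potA \<gamma> v i = v i 0 0 + \<gamma> i"

definition potP :: "(nat \<Rightarrow> real) \<Rightarrow> vec \<Rightarrow> nat \<Rightarrow> real" where
  "potP \<gamma> v i = - v i 0 1 - \<gamma> i"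

definition potC :: "(nat \<Rightarrow> real) \<Rightarrow> vec \<Rightarrow> nat \<Rightarrow> real" where
  "potC \<gamma> v j = v j 1 0 - \<gamma> j"

definition potQ :: "(nat \<Rightarrow> real) \<Rightarrow> vec \<Rightarrow> nat \<Rightarrow> real" where
  "potQ \<gamma> v j = \<gamma> j - v j 1 1"

lemmas pot_defs = potA_def potP_def potC_def potQ_def

definition diff_constraints :: "nat \<Rightarrow> (nat \<Rightarrow> real) \<Rightarrow> vec \<Rightarrow> bool" where
  "diff_constraints n \<gamma> v \<longleftrightarrow>
     (\<forall>i<n. potA \<gamma> v i \<le> potP \<gamma> v i + \<gamma> i + \<gamma> 0) \<and>
     (\<forall>i<n. \<forall>j<n. potC \<gamma> v j \<le> potP \<gamma> v i) \<and>
     (\<forall>i<n. \<forall>j<n. potA \<gamma> v i \<le> potQ \<gamma> v j) \<and>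
     (\<forall>j<n. potC \<gamma> v j + \<gamma> j + \<gamma> (n - 1) \<le> potQ \<gamma> v j)"

lemma diff_constraintsD:
  assumes "diff_constraints n \<gamma> v" "i < n" "j < n"
  shows "potA \<gamma> v i \<le> potP \<gamma> v i + \<gamma> i + \<gamma> 0"
    and "potC \<gamma> v j \<le> potP \<gamma> v i"
    and "potA \<gamma> v i \<le> potQ \<gamma> v j"
    and "potC \<gamma> v j + \<gamma> j + \<gamma> (n - 1) \<le> potQ \<gamma> v j"
  using assms unfolding diff_constraints_def by blast+

definition shifted :: "nat \<Rightarrow> vec \<Rightarrow> vec \<Rightarrow> real \<Rightarrow> bool" where
  "shifted n v w s \<longleftrightarrow> (\<forall>i<n.
     w i 0 0 = v i 0 0 + s \<and> w i 0 1 = v i 0 1 - s \<and> w i 1 0 = v i 1 0 + s \<and> w i 1 1 = v i 1 1 - s)"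

lemma shifted_iff_potentials:
  "shifted n v w s \<longleftrightarrow> (\<forall>i<n.
     potA \<gamma> w i = potA \<gamma> v i + s \<and> potP \<gamma> w i = potP \<gamma> v i + s \<and>
     potC \<gamma> w i = potC \<gamma> v i + s \<and> potQ \<gamma> w i = potQ \<gamma> v i + s)"
  by (auto simp: shifted_def pot_defs algebra_simps)

lemma shifted_imp_M_equiv: "shifted n v w s \<Longrightarrow> M_equiv n v w"
  unfolding M_equiv_def shifted_def by (auto simp: Mv_def le_Suc_eq)

lemma M_equiv_imp_shifted:
  assumes "0 < n" "M_equiv n v w"
  shows "shifted n v w (w 0 0 0 - v 0 0 0)"
  unfolding shifted_def
proof (intro allI impI conjI)
  fix i assume "i < n"
  have row: "Mv v i' j d0 d1 = Mv w i' j d0 d1" if "i' \<in> {0, i}" "j \<in> {0, i}" "d0 \<le> 1" "d1 \<le> 1"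
    for i' j d0 d1
    using assms that \<open>i < n\<close> unfolding M_equiv_def by auto
  let ?s = "w 0 0 0 - v 0 0 0"
  have w011: "w 0 1 1 = v 0 1 1 - ?s" using row[of 0 0 0 1] by (simp add: Mv_def)
  have w001: "w 0 0 1 = v 0 0 1 - ?s" using row[of 0 0 0 0] by (simp add: Mv_def)
  show w00: "w i 0 0 = v i 0 0 + ?s" using row[of i 0 0 1] w011 by (simp add: Mv_def)
  show "w i 0 1 = v i 0 1 - ?s" using row[of i 0 0 0] w00 by (simp add: Mv_def)
  show "w i 1 0 = v i 1 0 + ?s" using row[of 0 i 1 0] w001 by (simp add: Mv_def)
  show "w i 1 1 = v i 1 1 - ?s" using row[of 0 i 0 1] by (simp add: Mv_def)
qed

lemma M_equiv_sym: "M_equiv n v w \<Longrightarrow> M_equiv n w v"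
  unfolding M_equiv_def by metis

lemma Mv_add_scaled:
  "Mv (\<lambda>y d z. v y d z + t * \<delta> y d z) i j d0 d1 = Mv v i j d0 d1 + t * Mv \<delta> i j d0 d1"
  by (simp add: Mv_def algebra_simps)

lemma inH_perturb:
  assumes vH: "inH n \<gamma> v"
    and slack: "\<And>i j d0 d1. i < n \<Longrightarrow> j < n \<Longrightarrow> d0 \<le> 1 \<Longrightarrow> d1 \<le> 1 \<Longrightarrow>
      Mv \<delta> i j d0 d1 \<noteq> 0 \<Longrightarrow> Mv v i j d0 d1 < \<gamma> j - \<gamma> i"
  obtains t where "0 < t" "\<And>s. \<bar>s\<bar> \<le> t \<Longrightarrow> inH n \<gamma> (\<lambda>y d z. v y d z + s * \<delta> y d z)"
proof -
  define E where "E = {(i, j, d0, d1). i < n \<and> j < n \<and> d0 \<le> 1 \<and> d1 \<le> (1::nat) \<and> Mv \<delta> i j d0 d1 \<noteq> 0}"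
  define ratio where
    "ratio = (\<lambda>(i, j, d0, d1). (\<gamma> j - \<gamma> i - Mv v i j d0 d1) / \<bar>Mv \<delta> i j d0 d1\<bar>)"
  define t where "t = Min (insert 1 (ratio ` E))"
  have "finite E"
    by (rule finite_subset[of _ "{..<n} \<times> {..<n} \<times> {..1} \<times> {..1}"]) (auto simp: E_def)
  have "0 < ratio e" if "e \<in> E" for e
    using that slack by (auto simp: E_def ratio_def)
  with \<open>finite E\<close> have "0 < t"
    by (simp add: t_def)
  moreover have "inH n \<gamma> (\<lambda>y d z. v y d z + s * \<delta> y d z)" if s: "\<bar>s\<bar> \<le> t" for s
    unfolding inH_def
  proof (intro allI impI)
    fix i j d0 d1 :: nat
    assume row: "i < n" "j < n" "d0 \<le> 1" "d1 \<le> 1"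
    let ?m = "Mv \<delta> i j d0 d1"
    have le: "Mv v i j d0 d1 \<le> \<gamma> j - \<gamma> i"
      using vH row unfolding inH_def by blast
    show "Mv (\<lambda>y d z. v y d z + s * \<delta> y d z) i j d0 d1 \<le> \<gamma> j - \<gamma> i"
    proof (cases "?m = 0")
      case True
      then show ?thesis using le by (simp add: Mv_add_scaled)
    next
      case False
      then have "t \<le> ratio (i, j, d0, d1)"
        using \<open>finite E\<close> row by (auto simp: t_def E_def)
      then have "t * \<bar>?m\<bar> \<le> \<gamma> j - \<gamma> i - Mv v i j d0 d1"
        using False by (simp add: ratio_def le_divide_eq)
      moreover have "s * ?m \<le> \<bar>s\<bar> * \<bar>?m\<bar>"
        by (metis abs_ge_self abs_mult)
      moreover have "\<bar>s\<bar> * \<bar>?m\<bar> \<le> t * \<bar>?m\<bar>"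
        using s by (simp add: mult_right_mono)
      ultimately show ?thesis by (simp add: Mv_add_scaled)
    qed
  qed
  ultimately show ?thesis using that by blast
qed

lemma vertex_moves_tight_row:
  assumes vx: "is_vertex n \<gamma> v"
    and row: "i0 < n" "j0 < n" "d00 \<le> 1" "d10 \<le> 1" "Mv \<delta> i0 j0 d00 d10 \<noteq> 0"
  shows "\<exists>i<n. \<exists>j<n. \<exists>d0\<le>1. \<exists>d1\<le>1. Mv \<delta> i j d0 d1 \<noteq> 0 \<and> Mv v i j d0 d1 = \<gamma> j - \<gamma> i"
proof (rule ccontr)
  assume none: "\<not> ?thesis"
  have vH: "inH n \<gamma> v"
    using vx unfolding is_vertex_def by blast
  have "Mv v i j d0 d1 < \<gamma> j - \<gamma> i"
    if "i < n" "j < n" "d0 \<le> 1" "d1 \<le> 1" "Mv \<delta> i j d0 d1 \<noteq> 0" for i j d0 d1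
    using vH none that unfolding inH_def by (meson order_le_neq_trans)
  then obtain t where "0 < t"
    and ball: "\<And>s. \<bar>s\<bar> \<le> t \<Longrightarrow> inH n \<gamma> (\<lambda>y d z. v y d z + s * \<delta> y d z)"
    using inH_perturb[OF vH] by blast
  define v1 where "v1 = (\<lambda>y d z. v y d z + t * \<delta> y d z)"
  define v2 where "v2 = (\<lambda>y d z. v y d z + (- t) * \<delta> y d z)"
  have "inH n \<gamma> v1"
    unfolding v1_def by (rule ball) (use \<open>0 < t\<close> in simp)
  moreover have "inH n \<gamma> v2"
    unfolding v2_def by (rule ball) (use \<open>0 < t\<close> in simp)
  moreover have "\<forall>y<n. \<forall>d\<le>1. \<forall>z\<le>1. v y d z = 1/2 * v1 y d z + (1 - 1/2) * v2 y d z"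
    by (simp add: v1_def v2_def algebra_simps)
  ultimately have "M_equiv n v1 v"
    using vx[unfolded is_vertex_def, THEN conjunct2, rule_format, of "1/2" v1 v2] by simp
  then have "Mv v1 i0 j0 d00 d10 = Mv v i0 j0 d00 d10"
    using row unfolding M_equiv_def by blast
  then show False
    using row(5) \<open>0 < t\<close> by (simp add: v1_def Mv_add_scaled)
qed

lemma tight_row_of_convex_combination:
  assumes H1: "inH n \<gamma> v1" and H2: "inH n \<gamma> v2" and \<theta>: "0 < \<theta>" "\<theta> < 1"
    and comb: "\<forall>y<n. \<forall>d\<le>1. \<forall>z\<le>1. v y d z = \<theta> * v1 y d z + (1 - \<theta>) * v2 y d z"
    and row: "i < n" "j < n" "d0 \<le> 1" "d1 \<le> 1"
    and tight: "Mv v i j d0 d1 = \<gamma> j - \<gamma> i"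
  shows "Mv v1 i j d0 d1 = \<gamma> j - \<gamma> i"
proof -
  let ?m1 = "Mv v1 i j d0 d1" and ?m2 = "Mv v2 i j d0 d1" and ?c = "\<gamma> j - \<gamma> i"
  have "?c = \<theta> * ?m1 + (1 - \<theta>) * ?m2"
    using comb row tight[symmetric] by (simp add: Mv_def algebra_simps)
  moreover have "?m1 \<le> ?c" "?m2 \<le> ?c"
    using H1 H2 row unfolding inH_def by blast+
  moreover from this(2) have "(1 - \<theta>) * ?m2 \<le> (1 - \<theta>) * ?c"
    using \<theta> by (simp add: mult_left_mono)
  ultimately have "\<theta> * ?c \<le> \<theta> * ?m1"
    by (simp add: algebra_simps)
  with \<open>?m1 \<le> ?c\<close> \<theta> show ?thesis
    by (simp add: mult_le_cancel_left_pos)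
qed

(* Raises by one the potentials of the nodes selected by SA, SP, SC and SQ. *)
definition cut_dir :: "(nat \<Rightarrow> bool) \<Rightarrow> (nat \<Rightarrow> bool) \<Rightarrow> (nat \<Rightarrow> bool) \<Rightarrow> (nat \<Rightarrow> bool) \<Rightarrow> vec" where
  "cut_dir SA SP SC SQ y d z =
     (if d = 0 then (if z = 0 then of_bool (SA y) else - of_bool (SP y))
      else (if z = 0 then of_bool (SC y) else - of_bool (SQ y)))"

lemma Mv_cut_dir:
  "Mv (cut_dir SA SP SC SQ) i j d0 d1 =
     (if d0 = 0 then of_bool (SA i) else of_bool (SC j)) -
     (if d1 = 0 then of_bool (SP i) else of_bool (SQ j))"
  by (simp add: Mv_def cut_dir_def)

lemma cut_dir_moved_row:
  fixes SA SP SC SQ :: "nat \<Rightarrow> bool"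
  assumes "0 < n"
    and crossed: "(\<exists>i<n. SA i \<noteq> SP i) \<or> (\<exists>i<n. \<exists>j<n. SC j \<noteq> SP i) \<or>
      (\<exists>i<n. \<exists>j<n. SA i \<noteq> SQ j) \<or> (\<exists>j<n. SC j \<noteq> SQ j)"
  obtains i j d0 d1 where "i < n" "j < n" "d0 \<le> 1" "d1 \<le> 1" "Mv (cut_dir SA SP SC SQ) i j d0 d1 \<noteq> 0"
  using crossed
proof (elim disjE exE conjE)
  fix i assume "i < n" "SA i \<noteq> SP i"
  then show thesis using that[of i 0 0 0] \<open>0 < n\<close> by (simp add: Mv_cut_dir of_bool_eq_iff)
next
  fix i j assume "i < n" "j < n" "SC j \<noteq> SP i"
  then show thesis using that[of i j 1 0] by (simp add: Mv_cut_dir of_bool_eq_iff)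
next
  fix i j assume "i < n" "j < n" "SA i \<noteq> SQ j"
  then show thesis using that[of i j 0 1] by (simp add: Mv_cut_dir of_bool_eq_iff)
next
  fix j assume "j < n" "SC j \<noteq> SQ j"
  then show thesis using that[of 0 j 1 1] \<open>0 < n\<close> by (simp add: Mv_cut_dir of_bool_eq_iff)
qed

definition levels :: "nat \<Rightarrow> (nat \<Rightarrow> real) \<Rightarrow> vec \<Rightarrow> real \<Rightarrow> real \<Rightarrow> bool" where
  "levels n \<gamma> v K L \<longleftrightarrow>
     (\<forall>i<n. potA \<gamma> v i \<le> L \<and> K \<le> potP \<gamma> v i) \<and> (\<forall>j<n. potC \<gamma> v j \<le> K \<and> L \<le> potQ \<gamma> v j) \<and>
     (\<exists>i<n. potA \<gamma> v i = L) \<and> (\<exists>i<n. potP \<gamma> v i = K) \<and>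
     (\<exists>j<n. potC \<gamma> v j = K) \<and> (\<exists>j<n. potQ \<gamma> v j = L)"

lemma levelsI:
  assumes dc: "diff_constraints n \<gamma> v"
    and "i1 < n" "potA \<gamma> v i1 = L" "i2 < n" "potP \<gamma> v i2 = K"
    and "j1 < n" "potC \<gamma> v j1 = K" "j2 < n" "potQ \<gamma> v j2 = L"
  shows "levels n \<gamma> v K L"
  unfolding levels_def using assms diff_constraintsD(2,3)[OF dc] by metis

lemma levels_tight_edge:
  assumes "levels n \<gamma> v K L" "i < n" "j < n"
  shows "potA \<gamma> v i = potQ \<gamma> v j \<Longrightarrow> potA \<gamma> v i = L \<and> potQ \<gamma> v j = L"
    and "potC \<gamma> v j = potP \<gamma> v i \<Longrightarrow> potC \<gamma> v j = K \<and> potP \<gamma> v i = K"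
  using assms unfolding levels_def by (metis order_antisym)+

lemma levels_shifted:
  assumes v: "levels n \<gamma> v K L" and w: "levels n \<gamma> w K' L'" and "shifted n v w s"
  shows "K' = K + s"
proof -
  have C: "potC \<gamma> w j = potC \<gamma> v j + s" if "j < n" for j
    using assms(3) that by (simp add: shifted_iff_potentials[of _ _ _ _ \<gamma>])
  obtain j where "j < n" "potC \<gamma> v j = K" using v unfolding levels_def by blast
  obtain j' where "j' < n" "potC \<gamma> w j' = K'" using w unfolding levels_def by blast
  have "potC \<gamma> w j \<le> K'" "potC \<gamma> v j' \<le> K"
    using v w \<open>j < n\<close> \<open>j' < n\<close> unfolding levels_def by blast+
  with C[OF \<open>j < n\<close>] C[OF \<open>j' < n\<close>] \<open>potC \<gamma> v j = K\<close> \<open>potC \<gamma> w j' = K'\<close> show ?thesis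
    by linarith
qed

definition two_level :: "nat \<Rightarrow> (nat \<Rightarrow> real) \<Rightarrow> vec \<Rightarrow> real \<Rightarrow> real \<Rightarrow> bool" where
  "two_level n \<gamma> v K L \<longleftrightarrow> diff_constraints n \<gamma> v \<and> levels n \<gamma> v K L \<and>
     (\<forall>i<n. (potA \<gamma> v i = L \<or> potP \<gamma> v i = K) \<and>
            (potA \<gamma> v i = L \<and> potP \<gamma> v i = K \<or> potA \<gamma> v i = potP \<gamma> v i + \<gamma> i + \<gamma> 0)) \<and>
     (\<forall>j<n. (potC \<gamma> v j = K \<or> potQ \<gamma> v j = L) \<and>
            (potC \<gamma> v j = K \<and> potQ \<gamma> v j = L \<or> potQ \<gamma> v j = potC \<gamma> v j + \<gamma> j + \<gamma> (n - 1))) \<and>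
     ((\<exists>i<n. L = K + \<gamma> i + \<gamma> 0) \<or> (\<exists>j<n. L = K + \<gamma> j + \<gamma> (n - 1)))"

lemma two_level_pair_levels:
  assumes tl: "two_level n \<gamma> v K L" and i: "i < n"
  shows "potA \<gamma> v i = L \<or> potP \<gamma> v i = K"
    and "potA \<gamma> v i = L \<and> potP \<gamma> v i = K \<longleftrightarrow> L \<le> K + \<gamma> i + \<gamma> 0"
    and "potC \<gamma> v i = K \<or> potQ \<gamma> v i = L"
    and "potC \<gamma> v i = K \<and> potQ \<gamma> v i = L \<longleftrightarrow> K + \<gamma> i + \<gamma> (n - 1) \<le> L"
proof -
  have dc: "diff_constraints n \<gamma> v" and lv: "levels n \<gamma> v K L"
    and A: "potA \<gamma> v i = L \<or> potP \<gamma> v i = K"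
           "potA \<gamma> v i = L \<and> potP \<gamma> v i = K \<or> potA \<gamma> v i = potP \<gamma> v i + \<gamma> i + \<gamma> 0"
    and C: "potC \<gamma> v i = K \<or> potQ \<gamma> v i = L"
           "potC \<gamma> v i = K \<and> potQ \<gamma> v i = L \<or> potQ \<gamma> v i = potC \<gamma> v i + \<gamma> i + \<gamma> (n - 1)"
    using tl i unfolding two_level_def by blast+
  have bounds: "potA \<gamma> v i \<le> L" "K \<le> potP \<gamma> v i" "potC \<gamma> v i \<le> K" "L \<le> potQ \<gamma> v i"
    using lv i unfolding levels_def by blast+
  show "potA \<gamma> v i = L \<or> potP \<gamma> v i = K" "potC \<gamma> v i = K \<or> potQ \<gamma> v i = L"
    using A C by blast+
  show "potA \<gamma> v i = L \<and> potP \<gamma> v i = K \<longleftrightarrow> L \<le> K + \<gamma> i + \<gamma> 0"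
    using A bounds diff_constraintsD(1)[OF dc i i] by auto
  show "potC \<gamma> v i = K \<and> potQ \<gamma> v i = L \<longleftrightarrow> K + \<gamma> i + \<gamma> (n - 1) \<le> L"
    using C bounds diff_constraintsD(4)[OF dc i i] by auto
qed

definition keeps_tight :: "nat \<Rightarrow> (nat \<Rightarrow> real) \<Rightarrow> vec \<Rightarrow> vec \<Rightarrow> bool" where
  "keeps_tight n \<gamma> v w \<longleftrightarrow>
     (\<forall>i<n. \<forall>j<n. potA \<gamma> v i = potQ \<gamma> v j \<longrightarrow> potA \<gamma> w i = potQ \<gamma> w j) \<and>
     (\<forall>i<n. \<forall>j<n. potC \<gamma> v j = potP \<gamma> v i \<longrightarrow> potC \<gamma> w j = potP \<gamma> w i) \<and>
     (\<forall>i<n. potA \<gamma> v i = potP \<gamma> v i + \<gamma> i + \<gamma> 0 \<longrightarrow> potA \<gamma> w i = potP \<gamma> w i + \<gamma> i + \<gamma> 0) \<and>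
     (\<forall>j<n. potQ \<gamma> v j = potC \<gamma> v j + \<gamma> j + \<gamma> (n - 1) \<longrightarrow>
            potQ \<gamma> w j = potC \<gamma> w j + \<gamma> j + \<gamma> (n - 1))"

lemma keeps_tightD:
  assumes "keeps_tight n \<gamma> v w" "i < n" "j < n"
  shows "potA \<gamma> v i = potQ \<gamma> v j \<Longrightarrow> potA \<gamma> w i = potQ \<gamma> w j"
    and "potC \<gamma> v j = potP \<gamma> v i \<Longrightarrow> potC \<gamma> w j = potP \<gamma> w i"
    and "potA \<gamma> v i = potP \<gamma> v i + \<gamma> i + \<gamma> 0 \<Longrightarrow> potA \<gamma> w i = potP \<gamma> w i + \<gamma> i + \<gamma> 0"
    and "potQ \<gamma> v j = potC \<gamma> v j + \<gamma> j + \<gamma> (n - 1) \<Longrightarrow>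
      potQ \<gamma> w j = potC \<gamma> w j + \<gamma> j + \<gamma> (n - 1)"
  using assms unfolding keeps_tight_def by blast+

lemma keeps_tight_level_shifts:
  assumes lv: "levels n \<gamma> v K L" and kt: "keeps_tight n \<gamma> v w"
  obtains sL sK where
    "\<And>i. i < n \<Longrightarrow> potA \<gamma> v i = L \<Longrightarrow> potA \<gamma> w i = L + sL"
    "\<And>j. j < n \<Longrightarrow> potQ \<gamma> v j = L \<Longrightarrow> potQ \<gamma> w j = L + sL"
    "\<And>i. i < n \<Longrightarrow> potP \<gamma> v i = K \<Longrightarrow> potP \<gamma> w i = K + sK"
    "\<And>j. j < n \<Longrightarrow> potC \<gamma> v j = K \<Longrightarrow> potC \<gamma> w j = K + sK"
proof -
  obtain iA iP jC jQ where at_level: "iA < n" "potA \<gamma> v iA = L" "iP < n" "potP \<gamma> v iP = K"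
    "jC < n" "potC \<gamma> v jC = K" "jQ < n" "potQ \<gamma> v jQ = L"
    using lv unfolding levels_def by blast
  define sL where "sL = potQ \<gamma> w jQ - L"
  define sK where "sK = potC \<gamma> w jC - K"
  have A: "potA \<gamma> w i = L + sL" if "i < n" "potA \<gamma> v i = L" for i
    using keeps_tightD(1)[OF kt that(1) at_level(7)] that at_level unfolding sL_def by simp
  have Q: "potQ \<gamma> w j = L + sL" if "j < n" "potQ \<gamma> v j = L" for j
    using keeps_tightD(1)[OF kt at_level(1) that(1)] A[OF at_level(1,2)] that at_level by simp
  have P: "potP \<gamma> w i = K + sK" if "i < n" "potP \<gamma> v i = K" for i
    using keeps_tightD(2)[OF kt that(1) at_level(5)] that at_level unfolding sK_def by simp
  have C: "potC \<gamma> w j = K + sK" if "j < n" "potC \<gamma> v j = K" for j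
    using keeps_tightD(2)[OF kt at_level(3) that(1)] P[OF at_level(3,4)] that at_level by simp
  from A Q P C show ?thesis
    by (rule that)
qed

lemma two_level_rigid_levels:
  assumes tl: "two_level n \<gamma> v K L" and kt: "keeps_tight n \<gamma> v w"
  obtains s where
    "\<And>i. i < n \<Longrightarrow> potA \<gamma> v i = L \<Longrightarrow> potA \<gamma> w i = L + s"
    "\<And>j. j < n \<Longrightarrow> potQ \<gamma> v j = L \<Longrightarrow> potQ \<gamma> w j = L + s"
    "\<And>i. i < n \<Longrightarrow> potP \<gamma> v i = K \<Longrightarrow> potP \<gamma> w i = K + s"
    "\<And>j. j < n \<Longrightarrow> potC \<gamma> v j = K \<Longrightarrow> potC \<gamma> w j = K + s"
proof -
  have lv: "levels n \<gamma> v K L"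
    and bridge: "(\<exists>t<n. L = K + \<gamma> t + \<gamma> 0) \<or> (\<exists>t<n. L = K + \<gamma> t + \<gamma> (n - 1))"
    using tl unfolding two_level_def by blast+
  obtain sL sK where
    A: "\<And>i. i < n \<Longrightarrow> potA \<gamma> v i = L \<Longrightarrow> potA \<gamma> w i = L + sL" and
    Q: "\<And>j. j < n \<Longrightarrow> potQ \<gamma> v j = L \<Longrightarrow> potQ \<gamma> w j = L + sL" and
    P: "\<And>i. i < n \<Longrightarrow> potP \<gamma> v i = K \<Longrightarrow> potP \<gamma> w i = K + sK" and
    C: "\<And>j. j < n \<Longrightarrow> potC \<gamma> v j = K \<Longrightarrow> potC \<gamma> w j = K + sK"
    using keeps_tight_level_shifts[OF lv kt] by blast
  \<comment> \<open>The tight pair joining the two levels forces them to move together.\<close>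
  from bridge have "sK = sL"
  proof (elim disjE exE conjE)
    fix t assume t: "t < n" "L = K + \<gamma> t + \<gamma> 0"
    then have "potA \<gamma> v t = L" "potP \<gamma> v t = K"
      using two_level_pair_levels(2)[OF tl t(1)] by auto
    with t show "sK = sL"
      using keeps_tightD(3)[OF kt t(1) t(1)] A[OF t(1)] P[OF t(1)] by auto
  next
    fix t assume t: "t < n" "L = K + \<gamma> t + \<gamma> (n - 1)"
    then have "potC \<gamma> v t = K" "potQ \<gamma> v t = L"
      using two_level_pair_levels(4)[OF tl t(1)] by auto
    with t show "sK = sL"
      using keeps_tightD(4)[OF kt t(1) t(1)] C[OF t(1)] Q[OF t(1)] by auto
  qed
  show ?thesis
    by (rule that[of sL]) (use A Q P C \<open>sK = sL\<close> in auto)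
qed

lemma two_level_rigid:
  assumes tl: "two_level n \<gamma> v K L" and kt: "keeps_tight n \<gamma> v w"
  obtains s where "shifted n v w s"
proof -
  let ?A = "potA \<gamma> v" and ?P = "potP \<gamma> v" and ?C = "potC \<gamma> v" and ?Q = "potQ \<gamma> v"
  let ?A' = "potA \<gamma> w" and ?P' = "potP \<gamma> w" and ?C' = "potC \<gamma> w" and ?Q' = "potQ \<gamma> w"
  obtain s where
    sA: "\<And>i. i < n \<Longrightarrow> ?A i = L \<Longrightarrow> ?A' i = L + s" and
    sQ: "\<And>j. j < n \<Longrightarrow> ?Q j = L \<Longrightarrow> ?Q' j = L + s" and
    sP: "\<And>i. i < n \<Longrightarrow> ?P i = K \<Longrightarrow> ?P' i = K + s" and
    sC: "\<And>j. j < n \<Longrightarrow> ?C j = K \<Longrightarrow> ?C' j = K + s"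
    using two_level_rigid_levels[OF tl kt] by blast
  have "?A' i = ?A i + s \<and> ?P' i = ?P i + s" if i: "i < n" for i
  proof -
    have "(?A i = L \<or> ?P i = K) \<and> (?A i = L \<and> ?P i = K \<or> ?A i = ?P i + \<gamma> i + \<gamma> 0)"
      using tl i unfolding two_level_def by blast
    then show ?thesis
      using sA[OF i] sP[OF i] keeps_tightD(3)[OF kt i i] by auto
  qed
  moreover have "?C' j = ?C j + s \<and> ?Q' j = ?Q j + s" if j: "j < n" for j
  proof -
    have "(?C j = K \<or> ?Q j = L) \<and> (?C j = K \<and> ?Q j = L \<or> ?Q j = ?C j + \<gamma> j + \<gamma> (n - 1))"
      using tl j unfolding two_level_def by blast
    then show ?thesis
      using sC[OF j] sQ[OF j] keeps_tightD(4)[OF kt j j] by auto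
  qed
  ultimately have "shifted n v w s"
    by (simp add: shifted_iff_potentials[of _ _ _ _ \<gamma>])
  then show ?thesis by (rule that)
qed

lemma potentials_uvec:
  assumes "y < n"
  shows "potA \<gamma> (uvec n \<gamma> \<alpha> B) y = (if B y 0 0 then - \<alpha> else \<gamma> y + \<gamma> 0)"
    and "potP \<gamma> (uvec n \<gamma> \<alpha> B) y = (if B y 0 1 then 0 else - \<alpha> - \<gamma> y - \<gamma> 0)"
    and "potC \<gamma> (uvec n \<gamma> \<alpha> B) y = (if B y 1 0 then 0 else - \<alpha> - \<gamma> y - \<gamma> (n - 1))"
    and "potQ \<gamma> (uvec n \<gamma> \<alpha> B) y = (if B y 1 1 then - \<alpha> else \<gamma> y + \<gamma> (n - 1))"
  using assms by (auto simp: uvec_def pot_defs)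

(* D plays the role of L - K, and of - alpha in the vertex map. *)
definition admissible_sig :: "nat \<Rightarrow> (nat \<Rightarrow> real) \<Rightarrow> real \<Rightarrow> sig \<Rightarrow> bool" where
  "admissible_sig n \<gamma> D B \<longleftrightarrow>
     (\<forall>i<n. (B i 0 0 \<or> B i 0 1) \<and> (B i 0 0 \<and> B i 0 1 \<longleftrightarrow> D \<le> \<gamma> i + \<gamma> 0)) \<and>
     (\<forall>j<n. (B j 1 0 \<or> B j 1 1) \<and> (B j 1 0 \<and> B j 1 1 \<longleftrightarrow> \<gamma> j + \<gamma> (n - 1) \<le> D)) \<and>
     (\<exists>i<n. B i 0 0) \<and> (\<exists>i<n. B i 0 1) \<and> (\<exists>j<n. B j 1 0) \<and> (\<exists>j<n. B j 1 1) \<and>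
     ((\<exists>i<n. D = \<gamma> i + \<gamma> 0) \<or> (\<exists>j<n. D = \<gamma> j + \<gamma> (n - 1)))"

lemma admissible_sigD:
  assumes "admissible_sig n \<gamma> D B" "i < n"
  shows "B i 0 0 \<or> B i 0 1" "B i 0 0 \<and> B i 0 1 \<longleftrightarrow> D \<le> \<gamma> i + \<gamma> 0"
    and "B i 1 0 \<or> B i 1 1" "B i 1 0 \<and> B i 1 1 \<longleftrightarrow> \<gamma> i + \<gamma> (n - 1) \<le> D"
  using assms unfolding admissible_sig_def by blast+

lemma uvec_diff_constraints:
  assumes adm: "admissible_sig n \<gamma> D B"
  shows "diff_constraints n \<gamma> (uvec n \<gamma> (- D) B)"
proof -
  let ?u = "uvec n \<gamma> (- D) B"
  have bounds: "potA \<gamma> ?u i \<le> D" "0 \<le> potP \<gamma> ?u i" "potC \<gamma> ?u i \<le> 0" "D \<le> potQ \<gamma> ?u i"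
    if "i < n" for i
    unfolding potentials_uvec[OF that] using admissible_sigD[OF adm that] by auto
  show ?thesis
    unfolding diff_constraints_def
  proof (intro conjI allI impI)
    fix i j assume "i < n" "j < n"
    show "potC \<gamma> ?u j \<le> potP \<gamma> ?u i" "potA \<gamma> ?u i \<le> potQ \<gamma> ?u j"
      using bounds[OF \<open>i < n\<close>] bounds[OF \<open>j < n\<close>] by linarith+
  next
    fix i assume "i < n"
    show "potA \<gamma> ?u i \<le> potP \<gamma> ?u i + \<gamma> i + \<gamma> 0"
      "potC \<gamma> ?u i + \<gamma> i + \<gamma> (n - 1) \<le> potQ \<gamma> ?u i"
      unfolding potentials_uvec[OF \<open>i < n\<close>] using admissible_sigD[OF adm \<open>i < n\<close>] by auto
  qed
qed

lemma uvec_two_level: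
  assumes adm: "admissible_sig n \<gamma> D B"
  shows "two_level n \<gamma> (uvec n \<gamma> (- D) B) 0 D"
proof -
  let ?u = "uvec n \<gamma> (- D) B"
  note dc = uvec_diff_constraints[OF adm]
  moreover have "levels n \<gamma> ?u 0 D"
  proof -
    obtain iA iP jC jQ where "iA < n" "B iA 0 0" "iP < n" "B iP 0 1"
      "jC < n" "B jC 1 0" "jQ < n" "B jQ 1 1"
      using adm unfolding admissible_sig_def by blast
    then show ?thesis
      by (intro levelsI[OF dc, of iA D iP 0 jC jQ]) (simp_all add: potentials_uvec)
  qed
  moreover have "(potA \<gamma> ?u i = D \<or> potP \<gamma> ?u i = 0) \<and>
      (potA \<gamma> ?u i = D \<and> potP \<gamma> ?u i = 0 \<or> potA \<gamma> ?u i = potP \<gamma> ?u i + \<gamma> i + \<gamma> 0)"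
    "(potC \<gamma> ?u i = 0 \<or> potQ \<gamma> ?u i = D) \<and>
      (potC \<gamma> ?u i = 0 \<and> potQ \<gamma> ?u i = D \<or> potQ \<gamma> ?u i = potC \<gamma> ?u i + \<gamma> i + \<gamma> (n - 1))"
    if "i < n" for i
    unfolding potentials_uvec[OF that] using admissible_sigD[OF adm that] by auto
  moreover have "(\<exists>i<n. D = 0 + \<gamma> i + \<gamma> 0) \<or> (\<exists>j<n. D = 0 + \<gamma> j + \<gamma> (n - 1))"
    using adm unfolding admissible_sig_def by simp
  ultimately show ?thesis
    unfolding two_level_def by blast
qed

definition signature :: "(nat \<Rightarrow> real) \<Rightarrow> vec \<Rightarrow> real \<Rightarrow> real \<Rightarrow> sig" where
  "signature \<gamma> v K L y d z =
     (if d = 0 then (if z = 0 then potA \<gamma> v y = L else potP \<gamma> v y = K)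
      else (if z = 0 then potC \<gamma> v y = K else potQ \<gamma> v y = L))"

lemma signature_simps [simp]:
  "signature \<gamma> v K L y 0 0 \<longleftrightarrow> potA \<gamma> v y = L"
  "signature \<gamma> v K L y 0 1 \<longleftrightarrow> potP \<gamma> v y = K"
  "signature \<gamma> v K L y 1 0 \<longleftrightarrow> potC \<gamma> v y = K"
  "signature \<gamma> v K L y 1 1 \<longleftrightarrow> potQ \<gamma> v y = L"
  by (simp_all add: signature_def)

lemma two_level_admissible_signature:
  assumes tl: "two_level n \<gamma> v K L"
  shows "admissible_sig n \<gamma> (L - K) (signature \<gamma> v K L)"
  unfolding admissible_sig_def signature_simps
proof (intro conjI allI impI)
  have "levels n \<gamma> v K L"
    using tl unfolding two_level_def by blast
  then show "\<exists>i<n. potA \<gamma> v i = L" "\<exists>i<n. potP \<gamma> v i = K"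
    "\<exists>j<n. potC \<gamma> v j = K" "\<exists>j<n. potQ \<gamma> v j = L"
    unfolding levels_def by blast+
  have "(\<exists>i<n. L = K + \<gamma> i + \<gamma> 0) \<or> (\<exists>j<n. L = K + \<gamma> j + \<gamma> (n - 1))"
    using tl unfolding two_level_def by blast
  then show "(\<exists>i<n. L - K = \<gamma> i + \<gamma> 0) \<or> (\<exists>j<n. L - K = \<gamma> j + \<gamma> (n - 1))"
    by (auto simp: algebra_simps)
next
  fix i assume i: "i < n"
  note pair = two_level_pair_levels[OF tl i]
  show "potA \<gamma> v i = L \<or> potP \<gamma> v i = K" "potC \<gamma> v i = K \<or> potQ \<gamma> v i = L"
    using pair(1,3) .
  show "potA \<gamma> v i = L \<and> potP \<gamma> v i = K \<longleftrightarrow> L - K \<le> \<gamma> i + \<gamma> 0"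
    using pair(2) by linarith
  show "potC \<gamma> v i = K \<and> potQ \<gamma> v i = L \<longleftrightarrow> \<gamma> i + \<gamma> (n - 1) \<le> L - K"
    using pair(4) by linarith
qed

lemma two_level_M_equiv_uvec:
  assumes tl: "two_level n \<gamma> v K L"
  shows "M_equiv n v (uvec n \<gamma> (- (L - K)) (signature \<gamma> v K L))"
proof -
  let ?u = "uvec n \<gamma> (- (L - K)) (signature \<gamma> v K L)"
  have "potA \<gamma> v i = potA \<gamma> ?u i + K \<and> potP \<gamma> v i = potP \<gamma> ?u i + K \<and>
      potC \<gamma> v i = potC \<gamma> ?u i + K \<and> potQ \<gamma> v i = potQ \<gamma> ?u i + K" if i: "i < n" for i
  proof -
    have "(potA \<gamma> v i = L \<or> potP \<gamma> v i = K) \<and>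
        (potA \<gamma> v i = L \<and> potP \<gamma> v i = K \<or> potA \<gamma> v i = potP \<gamma> v i + \<gamma> i + \<gamma> 0)"
      "(potC \<gamma> v i = K \<or> potQ \<gamma> v i = L) \<and>
        (potC \<gamma> v i = K \<and> potQ \<gamma> v i = L \<or> potQ \<gamma> v i = potC \<gamma> v i + \<gamma> i + \<gamma> (n - 1))"
      using tl i unfolding two_level_def by blast+
    then show ?thesis
      unfolding potentials_uvec[OF i] signature_simps by auto
  qed
  then have "shifted n ?u v K"
    unfolding shifted_iff_potentials[of _ _ _ _ \<gamma>] by blast
  then show ?thesis
    by (blast intro: M_equiv_sym shifted_imp_M_equiv)
qed

locale increasing_weights =
  fixes n :: nat and \<gamma> :: "nat \<Rightarrow> real"
  assumes n_pos: "1 \<le> n"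
    and \<gamma>_mono: "\<And>i j. i < j \<Longrightarrow> j < n \<Longrightarrow> \<gamma> i < \<gamma> j"
begin

lemma \<gamma>_le_iff: "i < n \<Longrightarrow> j < n \<Longrightarrow> \<gamma> i \<le> \<gamma> j \<longleftrightarrow> i \<le> j"
  using \<gamma>_mono[of i j] \<gamma>_mono[of j i] by (cases i j rule: linorder_cases) auto

lemma \<gamma>_bounds: "i < n \<Longrightarrow> \<gamma> 0 \<le> \<gamma> i \<and> \<gamma> i \<le> \<gamma> (n - 1)"
  using \<gamma>_le_iff[of 0 i] \<gamma>_le_iff[of i "n - 1"] by simp

lemma inH_iff_diff_constraints: "inH n \<gamma> v \<longleftrightarrow> diff_constraints n \<gamma> v"
proof
  assume vH: "inH n \<gamma> v"
  have row: "Mv v i j d0 d1 \<le> \<gamma> j - \<gamma> i" if "i < n" "j < n" "d0 \<le> 1" "d1 \<le> 1" for i j d0 d1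
    using vH that unfolding inH_def by blast
  have "0 < n" "n - 1 < n" using n_pos by auto
  show "diff_constraints n \<gamma> v"
    unfolding diff_constraints_def
  proof (intro conjI allI impI)
    fix i j assume "i < n" "j < n"
    show "potC \<gamma> v j \<le> potP \<gamma> v i" using row[of i j 1 0] \<open>i < n\<close> \<open>j < n\<close>
      by (simp add: Mv_def pot_defs)
    show "potA \<gamma> v i \<le> potQ \<gamma> v j" using row[of i j 0 1] \<open>i < n\<close> \<open>j < n\<close>
      by (simp add: Mv_def pot_defs)
  next
    fix i assume "i < n"
    show "potA \<gamma> v i \<le> potP \<gamma> v i + \<gamma> i + \<gamma> 0" using row[of i 0 0 0] \<open>i < n\<close> \<open>0 < n\<close>
      by (simp add: Mv_def pot_defs)
    show "potC \<gamma> v i + \<gamma> i + \<gamma> (n - 1) \<le> potQ \<gamma> v i" using row[of "n - 1" i 1 1] \<open>i < n\<close> \<open>n - 1 < n\<close>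
      by (simp add: Mv_def pot_defs)
  qed
next
  assume dc: "diff_constraints n \<gamma> v"
  show "inH n \<gamma> v"
    unfolding inH_def
  proof (intro allI impI)
    fix i j d0 d1 :: nat
    assume "i < n" "j < n" "d0 \<le> 1" "d1 \<le> 1"
    with \<gamma>_bounds[of i] \<gamma>_bounds[of j] diff_constraintsD[OF dc \<open>i < n\<close> \<open>j < n\<close>]
    show "Mv v i j d0 d1 \<le> \<gamma> j - \<gamma> i"
      by (auto simp: le_Suc_eq Mv_def pot_defs)
  qed
qed

lemma vertex_diff_constraints: "is_vertex n \<gamma> v \<Longrightarrow> diff_constraints n \<gamma> v"
  using inH_iff_diff_constraints unfolding is_vertex_def by blast

lemma convex_combination_keeps_tight:
  assumes "inH n \<gamma> v1" "inH n \<gamma> v2" "0 < \<theta>" "\<theta> < 1"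
    and "\<forall>y<n. \<forall>d\<le>1. \<forall>z\<le>1. v y d z = \<theta> * v1 y d z + (1 - \<theta>) * v2 y d z"
  shows "keeps_tight n \<gamma> v v1"
  unfolding keeps_tight_def
proof (intro conjI allI impI)
  note tight = tight_row_of_convex_combination[OF assms]
  have "0 < n" "n - 1 < n" using n_pos by auto
  fix i j assume "i < n" "j < n"
  show "potA \<gamma> v i = potQ \<gamma> v j \<Longrightarrow> potA \<gamma> v1 i = potQ \<gamma> v1 j"
    using tight[of i j 0 1] \<open>i < n\<close> \<open>j < n\<close> by (simp add: Mv_def pot_defs)
  show "potC \<gamma> v j = potP \<gamma> v i \<Longrightarrow> potC \<gamma> v1 j = potP \<gamma> v1 i"
    using tight[of i j 1 0] \<open>i < n\<close> \<open>j < n\<close> by (simp add: Mv_def pot_defs)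
  show "potA \<gamma> v i = potP \<gamma> v i + \<gamma> i + \<gamma> 0 \<Longrightarrow> potA \<gamma> v1 i = potP \<gamma> v1 i + \<gamma> i + \<gamma> 0"
    using tight[of i 0 0 0] \<open>i < n\<close> \<open>0 < n\<close> by (simp add: Mv_def pot_defs algebra_simps)
  show "potQ \<gamma> v j = potC \<gamma> v j + \<gamma> j + \<gamma> (n - 1) \<Longrightarrow>
      potQ \<gamma> v1 j = potC \<gamma> v1 j + \<gamma> j + \<gamma> (n - 1)"
    using tight[of "n - 1" j 1 1] \<open>j < n\<close> \<open>n - 1 < n\<close> by (simp add: Mv_def pot_defs algebra_simps)
qed

lemma two_level_imp_vertex:
  assumes tl: "two_level n \<gamma> v K L"
  shows "is_vertex n \<gamma> v"
proof -
  have face: "M_equiv n v1 v" if convex: "inH n \<gamma> v1" "inH n \<gamma> v2" "0 < \<theta>" "\<theta> < 1"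
    "\<forall>y<n. \<forall>d\<le>1. \<forall>z\<le>1. v y d z = \<theta> * v1 y d z + (1 - \<theta>) * v2 y d z" for \<theta> v1 v2
  proof -
    obtain s where "shifted n v v1 s"
      using two_level_rigid[OF tl convex_combination_keeps_tight[OF convex]] .
    then show ?thesis
      by (blast intro: M_equiv_sym shifted_imp_M_equiv)
  qed
  show ?thesis
    unfolding is_vertex_def
  proof (intro conjI allI impI)
    show "inH n \<gamma> v"
      using tl inH_iff_diff_constraints unfolding two_level_def by blast
    fix \<theta> v1 v2
    assume h: "0 < \<theta> \<and> \<theta> < 1 \<and> inH n \<gamma> v1 \<and> inH n \<gamma> v2 \<and>
      (\<forall>y<n. \<forall>d\<le>1. \<forall>z\<le>1. v y d z = \<theta> * v1 y d z + (1 - \<theta>) * v2 y d z)"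
    then show "M_equiv n v1 v"
      using face by blast
    have "\<forall>y<n. \<forall>d\<le>1. \<forall>z\<le>1. v y d z = (1 - \<theta>) * v2 y d z + (1 - (1 - \<theta>)) * v1 y d z"
      using h by (simp add: algebra_simps)
    then show "M_equiv n v2 v"
      using face[of v2 v1 "1 - \<theta>"] h by simp
  qed
qed

lemma tight_row_imp_tight_edge:
  assumes dc: "diff_constraints n \<gamma> v" and "i < n" "j < n"
  shows "Mv v i j 0 0 = \<gamma> j - \<gamma> i \<Longrightarrow> potA \<gamma> v i = potP \<gamma> v i + \<gamma> i + \<gamma> 0"
    and "Mv v i j 1 0 = \<gamma> j - \<gamma> i \<Longrightarrow> potC \<gamma> v j = potP \<gamma> v i"
    and "Mv v i j 0 1 = \<gamma> j - \<gamma> i \<Longrightarrow> potA \<gamma> v i = potQ \<gamma> v j"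
    and "Mv v i j 1 1 = \<gamma> j - \<gamma> i \<Longrightarrow> potQ \<gamma> v j = potC \<gamma> v j + \<gamma> j + \<gamma> (n - 1)"
  using diff_constraintsD[OF assms] \<gamma>_bounds[OF \<open>i < n\<close>] \<gamma>_bounds[OF \<open>j < n\<close>]
  by (simp_all add: Mv_def pot_defs)

lemma vertex_tight_edge_across_cut:
  fixes SA SP SC SQ :: "nat \<Rightarrow> bool"
  assumes vx: "is_vertex n \<gamma> v"
    and crossed: "(\<exists>i<n. SA i \<noteq> SP i) \<or> (\<exists>i<n. \<exists>j<n. SC j \<noteq> SP i) \<or>
      (\<exists>i<n. \<exists>j<n. SA i \<noteq> SQ j) \<or> (\<exists>j<n. SC j \<noteq> SQ j)"
  shows "(\<exists>i<n. SA i \<noteq> SP i \<and> potA \<gamma> v i = potP \<gamma> v i + \<gamma> i + \<gamma> 0) \<or>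
    (\<exists>i<n. \<exists>j<n. SC j \<noteq> SP i \<and> potC \<gamma> v j = potP \<gamma> v i) \<or>
    (\<exists>i<n. \<exists>j<n. SA i \<noteq> SQ j \<and> potA \<gamma> v i = potQ \<gamma> v j) \<or>
    (\<exists>j<n. SC j \<noteq> SQ j \<and> potQ \<gamma> v j = potC \<gamma> v j + \<gamma> j + \<gamma> (n - 1))"
proof -
  have "0 < n" using n_pos by simp
  obtain i0 j0 d00 d10 where "i0 < n" "j0 < n" "d00 \<le> 1" "d10 \<le> 1"
    "Mv (cut_dir SA SP SC SQ) i0 j0 d00 d10 \<noteq> 0"
    using cut_dir_moved_row[OF \<open>0 < n\<close> crossed] by blast
  then obtain i j d0 d1 where row: "i < n" "j < n" "d0 \<le> 1" "d1 \<le> 1"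
    and moved: "Mv (cut_dir SA SP SC SQ) i j d0 d1 \<noteq> 0" and tight: "Mv v i j d0 d1 = \<gamma> j - \<gamma> i"
    using vertex_moves_tight_row[OF vx] by blast
  note edge = tight_row_imp_tight_edge[OF vertex_diff_constraints[OF vx] row(1,2)]
  from row(3,4) consider "d0 = 0" "d1 = 0" | "d0 = 1" "d1 = 0" | "d0 = 0" "d1 = 1" | "d0 = 1" "d1 = 1"
    by (auto simp: le_Suc_eq)
  then show ?thesis
  proof cases
    case 1
    then have "SA i \<noteq> SP i" "potA \<gamma> v i = potP \<gamma> v i + \<gamma> i + \<gamma> 0"
      using moved tight edge(1) by (simp_all add: Mv_cut_dir of_bool_eq_iff)
    then show ?thesis using row by blast
  next
    case 2
    then have "SC j \<noteq> SP i" "potC \<gamma> v j = potP \<gamma> v i"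
      using moved tight edge(2) by (simp_all add: Mv_cut_dir of_bool_eq_iff)
    then show ?thesis using row by blast
  next
    case 3
    then have "SA i \<noteq> SQ j" "potA \<gamma> v i = potQ \<gamma> v j"
      using moved tight edge(3) by (simp_all add: Mv_cut_dir of_bool_eq_iff)
    then show ?thesis using row by blast
  next
    case 4
    then have "SC j \<noteq> SQ j" "potQ \<gamma> v j = potC \<gamma> v j + \<gamma> j + \<gamma> (n - 1)"
      using moved tight edge(4) by (simp_all add: Mv_cut_dir of_bool_eq_iff)
    then show ?thesis using row by blast
  qed
qed

lemma vertex_node_tight:
  assumes vx: "is_vertex n \<gamma> v" and i: "i < n"
  shows "potA \<gamma> v i = potP \<gamma> v i + \<gamma> i + \<gamma> 0 \<or> (\<exists>j<n. potA \<gamma> v i = potQ \<gamma> v j)"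
    and "potA \<gamma> v i = potP \<gamma> v i + \<gamma> i + \<gamma> 0 \<or> (\<exists>j<n. potC \<gamma> v j = potP \<gamma> v i)"
    and "potQ \<gamma> v i = potC \<gamma> v i + \<gamma> i + \<gamma> (n - 1) \<or> (\<exists>j<n. potC \<gamma> v i = potP \<gamma> v j)"
    and "potQ \<gamma> v i = potC \<gamma> v i + \<gamma> i + \<gamma> (n - 1) \<or> (\<exists>j<n. potA \<gamma> v j = potQ \<gamma> v i)"
  using vertex_tight_edge_across_cut[OF vx, of "\<lambda>k. k = i" "\<lambda>_. False" "\<lambda>_. False" "\<lambda>_. False"]
    vertex_tight_edge_across_cut[OF vx, of "\<lambda>_. False" "\<lambda>k. k = i" "\<lambda>_. False" "\<lambda>_. False"]
    vertex_tight_edge_across_cut[OF vx, of "\<lambda>_. False" "\<lambda>_. False" "\<lambda>k. k = i" "\<lambda>_. False"]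
    vertex_tight_edge_across_cut[OF vx, of "\<lambda>_. False" "\<lambda>_. False" "\<lambda>_. False" "\<lambda>k. k = i"] i
  by auto

lemma vertex_has_levels:
  assumes vx: "is_vertex n \<gamma> v"
  obtains K L where "levels n \<gamma> v K L"
proof -
  have "0 < n" "n - 1 < n" using n_pos by auto
  note dc = vertex_diff_constraints[OF vx]
  \<comment> \<open>If no A-Q (or no C-P) edge were tight, A_(n-1) and Q_0 would be tight with P_(n-1) and C_0,
    and then a_(n-1) - q_0 = p_(n-1) - c_0 would make both of these edges tight.\<close>
  have cycle: "potC \<gamma> v 0 \<le> potP \<gamma> v (n - 1)" "potA \<gamma> v (n - 1) \<le> potQ \<gamma> v 0"
    using diff_constraintsD(2,3)[OF dc \<open>n - 1 < n\<close> \<open>0 < n\<close>] by auto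
  have "\<exists>i<n. \<exists>j<n. potA \<gamma> v i = potQ \<gamma> v j"
  proof (rule ccontr)
    assume none: "\<not> ?thesis"
    then have "potA \<gamma> v (n - 1) = potP \<gamma> v (n - 1) + \<gamma> (n - 1) + \<gamma> 0"
      "potQ \<gamma> v 0 = potC \<gamma> v 0 + \<gamma> 0 + \<gamma> (n - 1)"
      using vertex_node_tight(1)[OF vx \<open>n - 1 < n\<close>] vertex_node_tight(4)[OF vx \<open>0 < n\<close>] by auto
    with cycle have "potA \<gamma> v (n - 1) = potQ \<gamma> v 0"
      by linarith
    with none \<open>0 < n\<close> \<open>n - 1 < n\<close> show False
      by blast
  qed
  then obtain i1 j1 where AQ: "i1 < n" "j1 < n" "potA \<gamma> v i1 = potQ \<gamma> v j1"
    by blast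
  have "\<exists>i<n. \<exists>j<n. potC \<gamma> v j = potP \<gamma> v i"
  proof (rule ccontr)
    assume none: "\<not> ?thesis"
    then have "potA \<gamma> v (n - 1) = potP \<gamma> v (n - 1) + \<gamma> (n - 1) + \<gamma> 0"
      "potQ \<gamma> v 0 = potC \<gamma> v 0 + \<gamma> 0 + \<gamma> (n - 1)"
      using vertex_node_tight(2)[OF vx \<open>n - 1 < n\<close>] vertex_node_tight(3)[OF vx \<open>0 < n\<close>] by auto
    with cycle have "potC \<gamma> v 0 = potP \<gamma> v (n - 1)"
      by linarith
    with none \<open>0 < n\<close> \<open>n - 1 < n\<close> show False
      by blast
  qed
  then obtain i2 j2 where CP: "i2 < n" "j2 < n" "potC \<gamma> v j2 = potP \<gamma> v i2"
    by blast
  show ?thesis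
    using levelsI[OF dc, of i1 _ i2 _ j2 j1] AQ CP that by metis
qed

lemma vertex_level_pairs:
  assumes vx: "is_vertex n \<gamma> v" and lv: "levels n \<gamma> v K L" and i: "i < n"
  shows "potA \<gamma> v i = L \<or> potP \<gamma> v i = K"
    and "potC \<gamma> v i = K \<or> potQ \<gamma> v i = L"
proof -
  have "0 < n" using n_pos by simp
  have "(\<exists>k<n. potC \<gamma> v k = potP \<gamma> v i) \<or> (\<exists>k<n. potA \<gamma> v i = potQ \<gamma> v k)"
    using vertex_tight_edge_across_cut[OF vx, of "\<lambda>k. k = i" "\<lambda>k. k = i" "\<lambda>_. False" "\<lambda>_. False"]
      i \<open>0 < n\<close> by auto
  then show "potA \<gamma> v i = L \<or> potP \<gamma> v i = K"
    using levels_tight_edge[OF lv i] by blast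
  have "(\<exists>k<n. potC \<gamma> v i = potP \<gamma> v k) \<or> (\<exists>k<n. potA \<gamma> v k = potQ \<gamma> v i)"
    using vertex_tight_edge_across_cut[OF vx, of "\<lambda>_. False" "\<lambda>_. False" "\<lambda>k. k = i" "\<lambda>k. k = i"]
      i \<open>0 < n\<close> by auto
  then show "potC \<gamma> v i = K \<or> potQ \<gamma> v i = L"
    using levels_tight_edge[OF lv _ i] by blast
qed

lemma vertex_level_bridge:
  assumes vx: "is_vertex n \<gamma> v" and lv: "levels n \<gamma> v K L"
  shows "(\<exists>i<n. L = K + \<gamma> i + \<gamma> 0) \<or> (\<exists>j<n. L = K + \<gamma> j + \<gamma> (n - 1))"
proof -
  let ?SA = "\<lambda>i. potA \<gamma> v i = L" and ?SP = "\<lambda>i. potP \<gamma> v i \<noteq> K"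
    and ?SC = "\<lambda>j. potC \<gamma> v j \<noteq> K" and ?SQ = "\<lambda>j. potQ \<gamma> v j = L"
  obtain i1 j2 where "i1 < n" "potA \<gamma> v i1 = L" "j2 < n" "potC \<gamma> v j2 = K"
    using lv unfolding levels_def by blast
  then have "(\<exists>i<n. ?SA i \<noteq> ?SP i) \<or> (\<exists>i<n. \<exists>j<n. ?SC j \<noteq> ?SP i) \<or>
      (\<exists>i<n. \<exists>j<n. ?SA i \<noteq> ?SQ j) \<or> (\<exists>j<n. ?SC j \<noteq> ?SQ j)"
    by (cases "potP \<gamma> v i1 = K") auto
  \<comment> \<open>Tight A-Q edges lie inside this cut and tight C-P edges outside it, so the crossing
    edge is a tight pair joining the two levels.\<close>
  from vertex_tight_edge_across_cut[OF vx this] show ?thesis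
  proof (elim disjE exE conjE)
    fix i assume "i < n" "?SA i \<noteq> ?SP i" "potA \<gamma> v i = potP \<gamma> v i + \<gamma> i + \<gamma> 0"
    with vertex_level_pairs(1)[OF vx lv \<open>i < n\<close>] show ?thesis
      by auto
  next
    fix i j assume "i < n" "j < n" "?SC j \<noteq> ?SP i" "potC \<gamma> v j = potP \<gamma> v i"
    with levels_tight_edge(2)[OF lv] show ?thesis
      by blast
  next
    fix i j assume "i < n" "j < n" "?SA i \<noteq> ?SQ j" "potA \<gamma> v i = potQ \<gamma> v j"
    with levels_tight_edge(1)[OF lv] show ?thesis
      by blast
  next
    fix j assume "j < n" "?SC j \<noteq> ?SQ j" "potQ \<gamma> v j = potC \<gamma> v j + \<gamma> j + \<gamma> (n - 1)"
    with vertex_level_pairs(2)[OF vx lv \<open>j < n\<close>] show ?thesis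
      by auto
  qed
qed

lemma vertex_imp_two_level:
  assumes vx: "is_vertex n \<gamma> v"
  obtains K L where "two_level n \<gamma> v K L"
proof -
  obtain K L where lv: "levels n \<gamma> v K L"
    using vertex_has_levels[OF vx] .
  have "(potA \<gamma> v i = L \<or> potP \<gamma> v i = K) \<and>
      (potA \<gamma> v i = L \<and> potP \<gamma> v i = K \<or> potA \<gamma> v i = potP \<gamma> v i + \<gamma> i + \<gamma> 0)" if "i < n" for i
    using vertex_level_pairs(1)[OF vx lv that] vertex_node_tight(1,2)[OF vx that]
      levels_tight_edge[OF lv that] by blast
  moreover have "(potC \<gamma> v j = K \<or> potQ \<gamma> v j = L) \<and>
      (potC \<gamma> v j = K \<and> potQ \<gamma> v j = L \<or> potQ \<gamma> v j = potC \<gamma> v j + \<gamma> j + \<gamma> (n - 1))" if "j < n" for j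
    using vertex_level_pairs(2)[OF vx lv that] vertex_node_tight(3,4)[OF vx that]
      levels_tight_edge[OF lv _ that] by blast
  ultimately have "two_level n \<gamma> v K L"
    unfolding two_level_def using vertex_diff_constraints[OF vx] lv vertex_level_bridge[OF vx lv] by blast
  then show ?thesis by (rule that)
qed

lemma S1_imp_admissible:
  assumes S: "S1 n t B"
  shows "admissible_sig n \<gamma> (\<gamma> 0 + \<gamma> t) B"
proof -
  have "t < n" "t < n - 1" "n - 1 < n" using S unfolding S1_def by auto
  have top: "B i 0 0 \<and> B i 0 1" if "t \<le> i" "i < n" for i
    using S that unfolding S1_def by blast
  show ?thesis
    unfolding admissible_sig_def
  proof (intro conjI allI impI)
    fix i assume "i < n"
    show "B i 0 0 \<or> B i 0 1" "B i 0 0 \<and> B i 0 1 \<longleftrightarrow> \<gamma> 0 + \<gamma> t \<le> \<gamma> i + \<gamma> 0"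
      using S top[OF _ \<open>i < n\<close>] \<open>i < n\<close> \<open>t < n\<close> unfolding S1_def
      by (cases "t \<le> i"; auto simp: \<gamma>_le_iff)+
    have "\<gamma> i + \<gamma> (n - 1) > \<gamma> 0 + \<gamma> t"
      using \<gamma>_bounds[OF \<open>i < n\<close>] \<gamma>_mono[OF \<open>t < n - 1\<close> \<open>n - 1 < n\<close>] by linarith
    then show "B i 1 0 \<or> B i 1 1" "B i 1 0 \<and> B i 1 1 \<longleftrightarrow> \<gamma> i + \<gamma> (n - 1) \<le> \<gamma> 0 + \<gamma> t"
      using S \<open>i < n\<close> unfolding S1_def by auto
  next
    show "\<exists>i<n. B i 0 0" "\<exists>i<n. B i 0 1"
      using top[OF order.refl \<open>t < n\<close>] \<open>t < n\<close> by blast+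
    show "\<exists>j<n. B j 1 0" "\<exists>j<n. B j 1 1"
      using S unfolding S1_def by blast+
    show "(\<exists>i<n. \<gamma> 0 + \<gamma> t = \<gamma> i + \<gamma> 0) \<or> (\<exists>j<n. \<gamma> 0 + \<gamma> t = \<gamma> j + \<gamma> (n - 1))"
      using \<open>t < n\<close> by (metis add.commute)
  qed
qed

lemma admissible_imp_S1:
  assumes "t + 2 \<le> n" and adm: "admissible_sig n \<gamma> (\<gamma> 0 + \<gamma> t) B"
  shows "S1 n t B"
proof -
  have "t < n" "t < n - 1" "n - 1 < n" using assms(1) by auto
  have AP: "(B i 0 0 \<or> B i 0 1) \<and> (B i 0 0 \<and> B i 0 1 \<longleftrightarrow> t \<le> i)" if "i < n" for i
    using adm that \<open>t < n\<close> unfolding admissible_sig_def by (auto simp: \<gamma>_le_iff)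
  have CQ: "B j 1 0 \<noteq> B j 1 1" if "j < n" for j
  proof -
    have "\<gamma> j + \<gamma> (n - 1) > \<gamma> 0 + \<gamma> t"
      using \<gamma>_bounds[OF that] \<gamma>_mono[OF \<open>t < n - 1\<close> \<open>n - 1 < n\<close>] by linarith
    then show ?thesis
      using adm that unfolding admissible_sig_def by auto
  qed
  show ?thesis
    unfolding S1_def
  proof (intro conjI allI impI)
    fix i assume "t \<le> i \<and> i < n"
    then show "B i 0 0" "B i 0 1"
      using AP by blast+
  next
    fix i assume "i < t"
    then show "B i 0 0 \<noteq> B i 0 1"
      using AP[of i] \<open>t < n\<close> by auto
  next
    show "\<exists>i<n. \<exists>j<n. B i 1 0 \<and> B j 1 1"
      using adm unfolding admissible_sig_def by blast
  qed (use assms(1) CQ in auto)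
qed

lemma S2_imp_admissible:
  assumes S: "S2 n B"
  shows "admissible_sig n \<gamma> (\<gamma> 0 + \<gamma> (n - 1)) B"
proof -
  have "0 < n" "n - 1 < n" using n_pos by auto
  show ?thesis
    unfolding admissible_sig_def
  proof (intro conjI allI impI)
    fix i assume "i < n"
    show "B i 0 0 \<or> B i 0 1" "B i 0 0 \<and> B i 0 1 \<longleftrightarrow> \<gamma> 0 + \<gamma> (n - 1) \<le> \<gamma> i + \<gamma> 0"
      using S \<open>i < n\<close> \<open>n - 1 < n\<close> unfolding S2_def
      by (cases "i = n - 1"; auto simp: \<gamma>_le_iff)+
    show "B i 1 0 \<or> B i 1 1" "B i 1 0 \<and> B i 1 1 \<longleftrightarrow> \<gamma> i + \<gamma> (n - 1) \<le> \<gamma> 0 + \<gamma> (n - 1)"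
      using S \<open>i < n\<close> \<open>0 < n\<close> unfolding S2_def
      by (cases "i = 0"; auto simp: \<gamma>_le_iff)+
  next
    show "\<exists>i<n. B i 0 0" "\<exists>i<n. B i 0 1"
      using S \<open>n - 1 < n\<close> unfolding S2_def by blast+
    show "\<exists>j<n. B j 1 0" "\<exists>j<n. B j 1 1"
      using S \<open>0 < n\<close> unfolding S2_def by blast+
    show "(\<exists>i<n. \<gamma> 0 + \<gamma> (n - 1) = \<gamma> i + \<gamma> 0) \<or> (\<exists>j<n. \<gamma> 0 + \<gamma> (n - 1) = \<gamma> j + \<gamma> (n - 1))"
      using \<open>0 < n\<close> by auto
  qed
qed

lemma admissible_imp_S2:
  assumes adm: "admissible_sig n \<gamma> (\<gamma> 0 + \<gamma> (n - 1)) B"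
  shows "S2 n B"
proof -
  have "0 < n" "n - 1 < n" using n_pos by auto
  have AP: "(B i 0 0 \<or> B i 0 1) \<and> (B i 0 0 \<and> B i 0 1 \<longleftrightarrow> i = n - 1)" if "i < n" for i
    using adm that \<open>n - 1 < n\<close> unfolding admissible_sig_def by (auto simp: \<gamma>_le_iff)
  have CQ: "(B j 1 0 \<or> B j 1 1) \<and> (B j 1 0 \<and> B j 1 1 \<longleftrightarrow> j = 0)" if "j < n" for j
    using adm that \<open>0 < n\<close> unfolding admissible_sig_def by (auto simp: \<gamma>_le_iff)
  show ?thesis
    unfolding S2_def
  proof (intro conjI allI impI)
    show "B (n - 1) 0 0" "B (n - 1) 0 1"
      using AP[OF \<open>n - 1 < n\<close>] by blast+
    show "B 0 1 0" "B 0 1 1"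
      using CQ[OF \<open>0 < n\<close>] by blast+
  next
    fix i assume "i < n - 1"
    then have "i < n" by simp
    with \<open>i < n - 1\<close> show "B i 0 0 \<noteq> B i 0 1"
      using AP[of i] by auto
  next
    fix j assume "0 < j \<and> j \<le> n - 1"
    then show "B j 1 0 \<noteq> B j 1 1"
      using CQ[of j] \<open>n - 1 < n\<close> by auto
  qed
qed

lemma S3_imp_admissible:
  assumes S: "S3 n t B"
  shows "admissible_sig n \<gamma> (\<gamma> t + \<gamma> (n - 1)) B"
proof -
  have "0 < t" "t < n" using S n_pos unfolding S3_def by auto
  have low: "B i 1 0 \<and> B i 1 1" if "i \<le> t" for i
    using S that unfolding S3_def by blast
  show ?thesis
    unfolding admissible_sig_def
  proof (intro conjI allI impI)
    fix i assume "i < n"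
    have "\<gamma> i + \<gamma> 0 < \<gamma> t + \<gamma> (n - 1)"
      using \<gamma>_bounds[OF \<open>i < n\<close>] \<gamma>_mono[OF \<open>0 < t\<close> \<open>t < n\<close>] by linarith
    then show "B i 0 0 \<or> B i 0 1" "B i 0 0 \<and> B i 0 1 \<longleftrightarrow> \<gamma> t + \<gamma> (n - 1) \<le> \<gamma> i + \<gamma> 0"
      using S \<open>i < n\<close> unfolding S3_def by auto
    show "B i 1 0 \<or> B i 1 1" "B i 1 0 \<and> B i 1 1 \<longleftrightarrow> \<gamma> i + \<gamma> (n - 1) \<le> \<gamma> t + \<gamma> (n - 1)"
      using S low[of i] \<open>i < n\<close> \<open>t < n\<close> unfolding S3_def
      by (cases "i \<le> t"; auto simp: \<gamma>_le_iff)+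
  next
    show "\<exists>i<n. B i 0 0" "\<exists>i<n. B i 0 1"
      using S unfolding S3_def by blast+
    show "\<exists>j<n. B j 1 0" "\<exists>j<n. B j 1 1"
      using low[OF order.refl] \<open>t < n\<close> by blast+
    show "(\<exists>i<n. \<gamma> t + \<gamma> (n - 1) = \<gamma> i + \<gamma> 0) \<or> (\<exists>j<n. \<gamma> t + \<gamma> (n - 1) = \<gamma> j + \<gamma> (n - 1))"
      using \<open>t < n\<close> by auto
  qed
qed

lemma admissible_imp_S3:
  assumes "0 < t" "t < n" and adm: "admissible_sig n \<gamma> (\<gamma> t + \<gamma> (n - 1)) B"
  shows "S3 n t B"
proof -
  have AP: "B i 0 0 \<noteq> B i 0 1" if "i < n" for i
  proof -
    have "\<gamma> i + \<gamma> 0 < \<gamma> t + \<gamma> (n - 1)"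
      using \<gamma>_bounds[OF that] \<gamma>_mono[OF assms(1,2)] by linarith
    then show ?thesis
      using adm that unfolding admissible_sig_def by auto
  qed
  have CQ: "(B j 1 0 \<or> B j 1 1) \<and> (B j 1 0 \<and> B j 1 1 \<longleftrightarrow> j \<le> t)" if "j < n" for j
    using adm that \<open>t < n\<close> unfolding admissible_sig_def by (auto simp: \<gamma>_le_iff)
  show ?thesis
    unfolding S3_def
  proof (intro conjI allI impI)
    fix i assume "i \<le> t"
    then show "B i 1 0" "B i 1 1"
      using CQ[of i] \<open>t < n\<close> by auto
  next
    fix i assume "t < i \<and> i < n"
    then show "B i 1 0 \<noteq> B i 1 1"
      using CQ[of i] by auto
  next
    show "\<exists>i<n. \<exists>j<n. B i 0 0 \<and> B j 0 1"
      using adm unfolding admissible_sig_def by blast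
  qed (use assms AP in auto)
qed

lemma admissible_uvec_in_Vset:
  assumes adm: "admissible_sig n \<gamma> D B"
  shows "uvec n \<gamma> (- D) B \<in> Vset n \<gamma>"
proof -
  from adm have "(\<exists>t<n. D = \<gamma> 0 + \<gamma> t) \<or> (\<exists>t<n. D = \<gamma> t + \<gamma> (n - 1))"
    unfolding admissible_sig_def by (auto simp: add.commute)
  then show ?thesis
  proof (elim disjE exE conjE)
    fix t assume "t < n" and D: "D = \<gamma> 0 + \<gamma> t"
    show ?thesis
    proof (cases "t = n - 1")
      case True
      with adm D have "S2 n B" by (simp add: admissible_imp_S2)
      with D True show ?thesis unfolding Vset_def by auto
    next
      case False
      with \<open>t < n\<close> adm D have "S1 n t B" by (simp add: admissible_imp_S1)
      with D show ?thesis unfolding Vset_def by auto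
    qed
  next
    fix t assume "t < n" and D: "D = \<gamma> t + \<gamma> (n - 1)"
    show ?thesis
    proof (cases "t = 0")
      case True
      with adm D have "S2 n B" by (simp add: admissible_imp_S2)
      with D True show ?thesis unfolding Vset_def by auto
    next
      case False
      with \<open>t < n\<close> adm D have "S3 n t B" by (simp add: admissible_imp_S3)
      with D show ?thesis unfolding Vset_def by auto
    qed
  qed
qed

lemma Vset_eq_admissible: "Vset n \<gamma> = {uvec n \<gamma> (- D) B | D B. admissible_sig n \<gamma> D B}"
proof (intro equalityI subsetI)
  fix v assume "v \<in> Vset n \<gamma>"
  then consider t B where "v = uvec n \<gamma> (- (\<gamma> 0 + \<gamma> t)) B" "S1 n t B"
    | B where "v = uvec n \<gamma> (- (\<gamma> 0 + \<gamma> (n - 1))) B" "S2 n B"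
    | t B where "v = uvec n \<gamma> (- (\<gamma> t + \<gamma> (n - 1))) B" "S3 n t B"
    unfolding Vset_def by fastforce
  then show "v \<in> {uvec n \<gamma> (- D) B | D B. admissible_sig n \<gamma> D B}"
    by cases (use S1_imp_admissible S2_imp_admissible S3_imp_admissible in blast)+
qed (use admissible_uvec_in_Vset in blast)

lemma Vset_M_equiv_imp_eq:
  assumes "v \<in> Vset n \<gamma>" "w \<in> Vset n \<gamma>" and eqv: "M_equiv n v w"
  shows "v = w"
proof -
  obtain D B D' B' where v: "v = uvec n \<gamma> (- D) B" "admissible_sig n \<gamma> D B"
    and w: "w = uvec n \<gamma> (- D') B'" "admissible_sig n \<gamma> D' B'"
    using assms(1,2) unfolding Vset_eq_admissible by blast
  have "levels n \<gamma> v 0 D" "levels n \<gamma> w 0 D'"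
    using uvec_two_level v w unfolding two_level_def by blast+
  moreover have sh: "shifted n v w (w 0 0 0 - v 0 0 0)"
    using M_equiv_imp_shifted eqv n_pos by simp
  ultimately have "w 0 0 0 - v 0 0 0 = 0"
    using levels_shifted by fastforce
  with sh have "v y d z = w y d z" if "y < n" "d \<le> 1" "z \<le> 1" for y d z
    using that unfolding shifted_def by (auto simp: le_Suc_eq)
  moreover have "v y d z = w y d z" if "\<not> (y < n \<and> d \<le> 1 \<and> z \<le> 1)" for y d z
    using that unfolding v w uvec_def by auto
  ultimately show "v = w"
    by blast
qed

end

theorem theorem1:
  fixes n :: nat and \<gamma> :: "nat \<Rightarrow> real"
  assumes "1 \<le> n"
    and "\<And>i j. i < j \<Longrightarrow> j < n \<Longrightarrow> \<gamma> i < \<gamma> j"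
  shows "(\<forall>v\<in>Vset n \<gamma>. is_vertex n \<gamma> v)
    \<and> (\<forall>v\<in>Vset n \<gamma>. \<forall>w\<in>Vset n \<gamma>. v \<noteq> w \<longrightarrow> \<not> M_equiv n v w)
    \<and> (\<forall>v. is_vertex n \<gamma> v \<longrightarrow> (\<exists>w\<in>Vset n \<gamma>. M_equiv n v w))"
proof -
  interpret increasing_weights n \<gamma>
    using assms by (rule increasing_weights.intro)
  show ?thesis
  proof (intro conjI ballI allI impI)
    fix v assume "v \<in> Vset n \<gamma>"
    then obtain D B where "v = uvec n \<gamma> (- D) B" "admissible_sig n \<gamma> D B"
      using Vset_eq_admissible by blast
    then show "is_vertex n \<gamma> v"
      using two_level_imp_vertex uvec_two_level by blast
  next
    fix v w assume "v \<in> Vset n \<gamma>" "w \<in> Vset n \<gamma>" "v \<noteq> w"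
    then show "\<not> M_equiv n v w"
      using Vset_M_equiv_imp_eq by blast
  next
    fix v assume "is_vertex n \<gamma> v"
    then obtain K L where "two_level n \<gamma> v K L"
      by (rule vertex_imp_two_level)
    then show "\<exists>w\<in>Vset n \<gamma>. M_equiv n v w"
      using two_level_M_equiv_uvec admissible_uvec_in_Vset[OF two_level_admissible_signature] by blast
  qed
qed

end
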